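(* Let $R$, $G$, $*$, $\sigma$ and $\mathcal{S}$ be as in the context. If $\mathcal{S}$ is anticommutative, then $(x^2,y)=1$ for all $x,y\in G\setminus G_*$.
   Context: Throughout, $R$ is a commutative ring with unity with $\operatorname{char}(R)\neq 2$, and $\mathcal{U}(R)$ is its unit group. $G$ is a group with an involution $*$, i.e. a map $x\mapsto x^*$ with $(xy)^*=y^*x^*$ and $(x^* )^*=x$. The map $\sigma:G\to\mathcal{U}(R)$ is a nontrivial group homomorphism with kernel $N=\ker\sigma$, and it is compatible with $*$: $xx^*\in N$ for all $x\in G$. The group ring $RG$ carries the involution $\left(\sum_{x\in G}\alpha_x x\right)^{\sigma*}=\sum_{x\in G}\sigma(x)\alpha_x x^*$. Write $G_*=\{x\in G: x^*=x\}$ and $N_*=G_*\cap N$. Let $\mathcal{S}$ be the $R$-submodule of $RG$ spanned by the union of the following three sets: - $2\mathcal{S}_1=\{2x: x\in N_*\}$; - $\mathcal{S}_2=\{\alpha x: x\in G_*\setminus N,\ \alpha\in R,\ \alpha(1-\sigma(x))=0\}$; - $\mathcal{S}_3=\{x+\sigma(x)x^*: x\in G\setminus G_*\}$. $\mathcal{S}$ is called anticommutative if $ab+ba=0$ for all $a,b\in\mathcal{S}$. The commutator is $(x,y)=x^{-1}y^{-1}xy$. *)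

theory Defs
  imports "HOL-Algebra.Group"
begin

text \<open>Group ring RG: elements are functions G -> R (finitely supported, vanishing
outside the carrier).  The group G is a HOL-Algebra group; the ring R is a type
of class comm_ring_1.\<close>

definition rg_delta :: "'g \<Rightarrow> 'g \<Rightarrow> 'r::comm_ring_1" where
  "rg_delta x = (\<lambda>z. if z = x then 1 else 0)"

definition rg_smult :: "'r::comm_ring_1 \<Rightarrow> ('g \<Rightarrow> 'r) \<Rightarrow> ('g \<Rightarrow> 'r)" where
  "rg_smult c a = (\<lambda>z. c * a z)"

definition rg_add :: "('g \<Rightarrow> 'r::comm_ring_1) \<Rightarrow> ('g \<Rightarrow> 'r) \<Rightarrow> ('g \<Rightarrow> 'r)" where
  "rg_add a b = (\<lambda>z. a z + b z)"

definition rg_zero :: "'g \<Rightarrow> 'r::comm_ring_1" where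
  "rg_zero = (\<lambda>z. 0)"

definition rg_mult :: "('g, 'b) monoid_scheme \<Rightarrow> ('g \<Rightarrow> 'r::comm_ring_1) \<Rightarrow> ('g \<Rightarrow> 'r) \<Rightarrow> ('g \<Rightarrow> 'r)" where
  "rg_mult G a b = (\<lambda>z. if z \<in> carrier G
      then (\<Sum>x\<in>{x \<in> carrier G. a x \<noteq> 0}. a x * b (inv\<^bsub>G\<^esub> x \<otimes>\<^bsub>G\<^esub> z))
      else 0)"

definition group_involution :: "('g, 'b) monoid_scheme \<Rightarrow> ('g \<Rightarrow> 'g) \<Rightarrow> bool" where
  "group_involution G st \<longleftrightarrow>
     (\<forall>x\<in>carrier G. st x \<in> carrier G) \<and>
     (\<forall>x\<in>carrier G. \<forall>y\<in>carrier G. st (x \<otimes>\<^bsub>G\<^esub> y) = st y \<otimes>\<^bsub>G\<^esub> st x) \<and>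
     (\<forall>x\<in>carrier G. st (st x) = x)"

definition unit_hom :: "('g, 'b) monoid_scheme \<Rightarrow> ('g \<Rightarrow> 'r::comm_ring_1) \<Rightarrow> bool" where
  "unit_hom G \<sigma> \<longleftrightarrow>
     (\<forall>x\<in>carrier G. \<sigma> x dvd 1) \<and>
     (\<forall>x\<in>carrier G. \<forall>y\<in>carrier G. \<sigma> (x \<otimes>\<^bsub>G\<^esub> y) = \<sigma> x * \<sigma> y)"

definition ker_sigma :: "('g, 'b) monoid_scheme \<Rightarrow> ('g \<Rightarrow> 'r::comm_ring_1) \<Rightarrow> 'g set" where
  "ker_sigma G \<sigma> = {x \<in> carrier G. \<sigma> x = 1}"

definition sym_elems :: "('g, 'b) monoid_scheme \<Rightarrow> ('g \<Rightarrow> 'g) \<Rightarrow> 'g set" where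
  "sym_elems G st = {x \<in> carrier G. st x = x}"

definition S_gens :: "('g, 'b) monoid_scheme \<Rightarrow> ('g \<Rightarrow> 'g) \<Rightarrow> ('g \<Rightarrow> 'r::comm_ring_1) \<Rightarrow> ('g \<Rightarrow> 'r) set" where
  "S_gens G st \<sigma> =
     {rg_smult 2 (rg_delta x) | x. x \<in> sym_elems G st \<inter> ker_sigma G \<sigma>}
   \<union> {rg_smult \<alpha> (rg_delta x) | x \<alpha>. x \<in> sym_elems G st - ker_sigma G \<sigma> \<and> \<alpha> * (1 - \<sigma> x) = 0}
   \<union> {rg_add (rg_delta x) (rg_smult (\<sigma> x) (rg_delta (st x))) | x. x \<in> carrier G - sym_elems G st}"

inductive_set S_span :: "('g, 'b) monoid_scheme \<Rightarrow> ('g \<Rightarrow> 'g) \<Rightarrow> ('g \<Rightarrow> 'r::comm_ring_1) \<Rightarrow> ('g \<Rightarrow> 'r) set"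
  for G st \<sigma> where
  zero: "rg_zero \<in> S_span G st \<sigma>"
| gen: "a \<in> S_gens G st \<sigma> \<Longrightarrow> a \<in> S_span G st \<sigma>"
| add: "a \<in> S_span G st \<sigma> \<Longrightarrow> b \<in> S_span G st \<sigma> \<Longrightarrow> rg_add a b \<in> S_span G st \<sigma>"
| smult: "a \<in> S_span G st \<sigma> \<Longrightarrow> rg_smult c a \<in> S_span G st \<sigma>"

definition anticommutative :: "('g, 'b) monoid_scheme \<Rightarrow> ('g \<Rightarrow> 'r::comm_ring_1) set \<Rightarrow> bool" where
  "anticommutative G S \<longleftrightarrow>
     (\<forall>a\<in>S. \<forall>b\<in>S. rg_add (rg_mult G a b) (rg_mult G b a) = rg_zero)"

definition gcomm :: "('g, 'b) monoid_scheme \<Rightarrow> 'g \<Rightarrow> 'g \<Rightarrow> 'g" where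
  "gcomm G x y = inv\<^bsub>G\<^esub> x \<otimes>\<^bsub>G\<^esub> inv\<^bsub>G\<^esub> y \<otimes>\<^bsub>G\<^esub> x \<otimes>\<^bsub>G\<^esub> y"

end

theory Submission
  imports Defs
begin

text \<open>For x \<notin> G_* put a_x = x + \<sigma>(x)x* \<in> S. Anticommuting 2\<cdot>1 with a_x gives 4 = 0, and
  a_x a_x + a_x a_x = 0 read at x x gives 2(1 + \<sigma>(x)^2) = 0 and x* x* = x x, since 2 \<noteq> 0.
  So p = x x is symmetric with 2(1 - \<sigma>(p)) = 0, whence 2p \<in> S, and anticommuting 2p with a_v
  shows p v \<in> {v p, v* p} for every v \<notin> G_*. Applying this to v = y, y*, x y, x y* leaves
  p y = y p as the only possibility.\<close>

lemma two_neq_zero_if_CHAR_neq_2: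
  assumes "CHAR('r::comm_ring_1) \<noteq> 2" and "(1::'r) \<noteq> 0"
  shows "(2::'r) \<noteq> 0"
proof
  assume "(2::'r) = 0"
  then have "CHAR('r) dvd 2"
    using of_nat_eq_0_iff_char_dvd[of 2, where 'a='r] by simp
  then have "CHAR('r) \<noteq> 0" "CHAR('r) \<le> 2"
    by (auto intro: dvd_imp_le gr0I)
  moreover have "CHAR('r) \<noteq> 1"
    using of_nat_CHAR[where 'a='r] assms(2) by auto
  ultimately show False
    using assms(1) by linarith
qed

lemma rg_mult_eq_sum:
  assumes "finite A" "A \<subseteq> carrier G" "\<And>x. x \<in> carrier G \<Longrightarrow> a x \<noteq> 0 \<Longrightarrow> x \<in> A"
    and "z \<in> carrier G"
  shows "rg_mult G a b z = (\<Sum>x\<in>A. a x * b (inv\<^bsub>G\<^esub> x \<otimes>\<^bsub>G\<^esub> z))"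
proof -
  have "(\<Sum>x\<in>{x \<in> carrier G. a x \<noteq> 0}. a x * b (inv\<^bsub>G\<^esub> x \<otimes>\<^bsub>G\<^esub> z))
      = (\<Sum>x\<in>A. a x * b (inv\<^bsub>G\<^esub> x \<otimes>\<^bsub>G\<^esub> z))"
    by (rule sum.mono_neutral_left) (use assms in auto)
  then show ?thesis
    using assms(4) by (simp add: rg_mult_def)
qed

lemma anticommutativeD:
  assumes "anticommutative G S" "a \<in> S" "b \<in> S"
  shows "rg_mult G a b z + rg_mult G b a z = 0"
  using assms unfolding anticommutative_def rg_add_def rg_zero_def by metis

lemma group_involution_closed: "group_involution G st \<Longrightarrow> x \<in> carrier G \<Longrightarrow> st x \<in> carrier G"
  and group_involution_mult:
    "group_involution G st \<Longrightarrow> x \<in> carrier G \<Longrightarrow> y \<in> carrier G \<Longrightarrow>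
     st (x \<otimes>\<^bsub>G\<^esub> y) = st y \<otimes>\<^bsub>G\<^esub> st x"
  and group_involution_involutive: "group_involution G st \<Longrightarrow> x \<in> carrier G \<Longrightarrow> st (st x) = x"
  by (simp_all add: group_involution_def)

definition twists :: "('g, 'b) monoid_scheme \<Rightarrow> ('g \<Rightarrow> 'g) \<Rightarrow> 'g \<Rightarrow> bool" where
  "twists G st p \<longleftrightarrow> (\<forall>v\<in>carrier G. st v \<noteq> v \<longrightarrow>
     p \<otimes>\<^bsub>G\<^esub> v = v \<otimes>\<^bsub>G\<^esub> p \<or> p \<otimes>\<^bsub>G\<^esub> v = st v \<otimes>\<^bsub>G\<^esub> p)"

context group
begin

lemma rg_mult_smult_delta:
  assumes "g \<in> carrier G" "z \<in> carrier G"
  shows "rg_mult G (rg_smult c (rg_delta g)) b z = c * b (inv g \<otimes> z)"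
proof -
  have "rg_mult G (rg_smult c (rg_delta g)) b z
      = (\<Sum>u\<in>{g}. rg_smult c (rg_delta g) u * b (inv u \<otimes> z))"
    by (rule rg_mult_eq_sum) (use assms in \<open>auto simp: rg_smult_def rg_delta_def split: if_splits\<close>)
  then show ?thesis
    by (simp add: rg_smult_def rg_delta_def)
qed

lemma rg_mult_delta_add_smult_delta:
  assumes "u \<in> carrier G" "w \<in> carrier G" "u \<noteq> w" "z \<in> carrier G"
  shows "rg_mult G (rg_add (rg_delta u) (rg_smult s (rg_delta w))) b z
       = b (inv u \<otimes> z) + s * b (inv w \<otimes> z)"
proof -
  have "rg_mult G (rg_add (rg_delta u) (rg_smult s (rg_delta w))) b z
      = (\<Sum>v\<in>{u, w}. rg_add (rg_delta u) (rg_smult s (rg_delta w)) v * b (inv v \<otimes> z))"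
    by (rule rg_mult_eq_sum)
      (use assms in \<open>auto simp: rg_add_def rg_smult_def rg_delta_def split: if_splits\<close>)
  then show ?thesis
    using assms(3) by (simp add: rg_add_def rg_smult_def rg_delta_def)
qed

lemma group_involution_one:
  assumes "group_involution G st"
  shows "st \<one> = \<one>"
proof -
  have "st \<one> \<otimes> st \<one> = st \<one>"
    using group_involution_mult[OF assms, of \<one> \<one>] by simp
  then show ?thesis
    using group_involution_closed[OF assms, of \<one>] by (metis one_closed r_cancel_one')
qed

lemma gcomm_eq_one_if_commute:
  assumes "x \<in> carrier G" "y \<in> carrier G" "x \<otimes> y = y \<otimes> x"
  shows "gcomm G x y = \<one>"
proof -
  have "gcomm G x y = inv x \<otimes> (inv y \<otimes> (y \<otimes> x))"
    using assms by (simp add: gcomm_def m_assoc)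
  also have "\<dots> = \<one>"
    using assms(1,2) by (simp add: m_assoc[symmetric])
  finally show ?thesis .
qed

lemma unit_hom_one:
  assumes "unit_hom G \<sigma>"
  shows "\<sigma> \<one> = 1"
proof -
  obtain k where k: "1 = \<sigma> \<one> * k"
    using assms unfolding unit_hom_def by (meson dvdE one_closed)
  have "\<sigma> \<one> = \<sigma> \<one> * \<sigma> \<one>"
    using assms unfolding unit_hom_def by (metis one_closed l_one)
  then have "\<sigma> \<one> * k = \<sigma> \<one> * \<sigma> \<one> * k" by simp
  then show ?thesis
    using k by (simp add: mult.assoc)
qed

lemma square_commute_if_twisted:
  assumes "x \<in> carrier G" "y \<in> carrier G" "u \<in> carrier G" "x' \<in> carrier G"
    and "x \<otimes> y = u \<otimes> x'" "x \<otimes> u = y \<otimes> x'" "x' \<otimes> x' = x \<otimes> x"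
  shows "(x \<otimes> x) \<otimes> y = y \<otimes> (x \<otimes> x)"
proof -
  have "(x \<otimes> x) \<otimes> y = x \<otimes> (u \<otimes> x')"
    using assms by (simp add: m_assoc)
  also have "\<dots> = (y \<otimes> x') \<otimes> x'"
    using assms by (simp add: m_assoc[symmetric])
  also have "\<dots> = y \<otimes> (x \<otimes> x)"
    using assms by (simp add: m_assoc)
  finally show ?thesis .
qed

lemma product_twist_cases:
  assumes inv: "group_involution G st" and tw: "twists G st (x \<otimes> x)"
    and x: "x \<in> carrier G" and w: "w \<in> carrier G" "w' \<in> carrier G" "w' \<noteq> w"
    and pw: "(x \<otimes> x) \<otimes> w = w' \<otimes> (x \<otimes> x)"
  shows "x \<otimes> w = st w \<otimes> st x \<or> x \<otimes> w' = st w \<otimes> st x"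
proof (cases "st (x \<otimes> w) = x \<otimes> w")
  case True
  then show ?thesis
    using group_involution_mult[OF inv x w(1)] by simp
next
  case False
  have sx: "st x \<in> carrier G" "st w \<in> carrier G"
    using group_involution_closed[OF inv] x w by auto
  have pxw: "(x \<otimes> x) \<otimes> (x \<otimes> w) = (x \<otimes> w') \<otimes> (x \<otimes> x)"
    using x w pw by (simp add: m_assoc[symmetric]) (simp add: m_assoc)
  have "(x \<otimes> x) \<otimes> (x \<otimes> w) = (x \<otimes> w) \<otimes> (x \<otimes> x)
      \<or> (x \<otimes> x) \<otimes> (x \<otimes> w) = st (x \<otimes> w) \<otimes> (x \<otimes> x)"
    using tw False x w unfolding twists_def by blast
  moreover have "(x \<otimes> x) \<otimes> (x \<otimes> w) \<noteq> (x \<otimes> w) \<otimes> (x \<otimes> x)"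
    using pxw x w by simp
  ultimately have "(x \<otimes> w') \<otimes> (x \<otimes> x) = (st w \<otimes> st x) \<otimes> (x \<otimes> x)"
    using pxw group_involution_mult[OF inv x w(1)] by simp
  then show ?thesis
    using x w sx by simp
qed

text \<open>Otherwise p y = y* p and p y* = y p, and the twisting property applied to x y and x y*
  forces y = y*.\<close>
lemma square_commute_if_twists:
  assumes inv: "group_involution G st" and tw: "twists G st (x \<otimes> x)"
    and x: "x \<in> carrier G" and sq: "st x \<otimes> st x = x \<otimes> x"
    and y: "y \<in> carrier G" "st y \<noteq> y"
  shows "(x \<otimes> x) \<otimes> y = y \<otimes> (x \<otimes> x)"
proof (rule ccontr)
  let ?p = "x \<otimes> x"
  have sx: "st x \<in> carrier G" and sy: "st y \<in> carrier G" "st (st y) = y"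
    using x y group_involution_closed[OF inv] group_involution_involutive[OF inv] by auto
  assume ne: "?p \<otimes> y \<noteq> y \<otimes> ?p"
  then have py: "?p \<otimes> y = st y \<otimes> ?p"
    using tw y unfolding twists_def by blast
  have "?p \<otimes> st y \<noteq> st y \<otimes> ?p"
  proof
    assume "?p \<otimes> st y = st y \<otimes> ?p"
    with py have "?p \<otimes> st y = ?p \<otimes> y" by simp
    then show False
      using x y sy by simp
  qed
  then have psy: "?p \<otimes> st y = y \<otimes> ?p"
    using tw y sy unfolding twists_def by fastforce
  have A: "x \<otimes> y = st y \<otimes> st x \<or> x \<otimes> st y = st y \<otimes> st x"
    using product_twist_cases[OF inv tw x y(1) sy(1)] y py by auto
  have B: "x \<otimes> st y = y \<otimes> st x \<or> x \<otimes> y = y \<otimes> st x"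
    using product_twist_cases[OF inv tw x sy(1) y(1)] y sy psy by auto
  have "x \<otimes> y \<noteq> y \<otimes> st x"
    using square_commute_if_twisted[OF x y(1) y(1) sx _ _ sq] ne by auto
  with B have B': "x \<otimes> st y = y \<otimes> st x" by blast
  with A have "x \<otimes> st y = st y \<otimes> st x"
    using square_commute_if_twisted[OF x y(1) sy(1) sx _ _ sq] ne by auto
  with B' have "y \<otimes> st x = st y \<otimes> st x" by simp
  then show False
    using y sy sx by simp
qed

end

locale anticommutative_group_ring = group G for G (structure) +
  fixes st :: "'a \<Rightarrow> 'a" and \<sigma> :: "'a \<Rightarrow> 'r::comm_ring_1"
  assumes two_neq_zero: "(2::'r) \<noteq> 0"
    and involution: "group_involution G st"
    and unit_hom: "unit_hom G \<sigma>"
    and anticommutative: "anticommutative G (S_span G st \<sigma>)"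
begin

abbreviation S where "S \<equiv> S_span G st \<sigma>"

definition sym_pair :: "'a \<Rightarrow> 'a \<Rightarrow> 'r" where
  "sym_pair x = rg_add (rg_delta x) (rg_smult (\<sigma> x) (rg_delta (st x)))"

lemma sym_pair_in_S: "x \<in> carrier G \<Longrightarrow> st x \<noteq> x \<Longrightarrow> sym_pair x \<in> S"
  unfolding sym_pair_def by (rule S_span.gen) (auto simp: S_gens_def sym_elems_def)

lemma sym_pair_apply:
  "st x \<noteq> x \<Longrightarrow> sym_pair x v = (if v = x then 1 else 0) + \<sigma> x * (if v = st x then 1 else 0)"
  by (simp add: sym_pair_def rg_add_def rg_smult_def rg_delta_def)

lemma sym_pair_mult:
  assumes "x \<in> carrier G" "st x \<noteq> x" "z \<in> carrier G"
  shows "rg_mult G (sym_pair x) b z = b (inv x \<otimes> z) + \<sigma> x * b (inv (st x) \<otimes> z)"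
  unfolding sym_pair_def
  using assms group_involution_closed[OF involution]
  by (intro rg_mult_delta_add_smult_delta) auto

lemma two_delta_in_S:
  assumes "p \<in> carrier G" "st p = p" "2 * (1 - \<sigma> p) = 0"
  shows "rg_smult 2 (rg_delta p) \<in> S"
proof (rule S_span.gen)
  show "rg_smult 2 (rg_delta p) \<in> S_gens G st \<sigma>"
    using assms unfolding S_gens_def sym_elems_def ker_sigma_def by (cases "\<sigma> p = 1") blast+
qed

text \<open>Anticommutativity of 2\<cdot>1 and x + \<sigma>(x)x*, read at x.\<close>
lemma four_eq_zero:
  assumes x: "x \<in> carrier G" "st x \<noteq> x"
  shows "(4::'r) = 0"
proof -
  have sx: "st x \<in> carrier G"
    using x group_involution_closed[OF involution] by auto
  have "rg_smult 2 (rg_delta \<one>) \<in> S"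
    using two_delta_in_S group_involution_one[OF involution] unit_hom_one[OF unit_hom] by simp
  then have "rg_mult G (rg_smult 2 (rg_delta \<one>)) (sym_pair x) x
      + rg_mult G (sym_pair x) (rg_smult 2 (rg_delta \<one>)) x = 0"
    using anticommutativeD[OF anticommutative _ sym_pair_in_S[OF x]] by blast
  moreover have "rg_mult G (rg_smult 2 (rg_delta \<one>)) (sym_pair x) x = 2"
    using x by (simp add: rg_mult_smult_delta sym_pair_apply)
  moreover have "inv (st x) \<otimes> x \<noteq> \<one>"
    using x sx by (simp add: inv_solve_left')
  then have "rg_mult G (sym_pair x) (rg_smult 2 (rg_delta \<one>)) x = 2"
    using x by (simp add: sym_pair_mult rg_smult_def rg_delta_def)
  ultimately show ?thesis
    by simp
qed

text \<open>Anticommutativity of x + \<sigma>(x)x* with itself, read at x x.\<close>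
lemma sym_pair_square_coeff:
  assumes x: "x \<in> carrier G" "st x \<noteq> x"
  shows "2 * (1 + \<sigma> x * (\<sigma> x * (if st x \<otimes> st x = x \<otimes> x then 1 else 0))) = 0"
proof -
  let ?w = "inv (st x) \<otimes> (x \<otimes> x)"
  have sx: "st x \<in> carrier G"
    using x group_involution_closed[OF involution] by auto
  have "?w \<noteq> x"
  proof
    assume "?w = x"
    then have "x \<otimes> x = st x \<otimes> x"
      using x sx by (simp add: inv_solve_left')
    then show False
      using x sx by simp
  qed
  moreover have "?w = st x \<longleftrightarrow> st x \<otimes> st x = x \<otimes> x"
    using x sx by (auto simp: inv_solve_left')
  ultimately have "sym_pair x ?w = \<sigma> x * (if st x \<otimes> st x = x \<otimes> x then 1 else 0)"
    unfolding sym_pair_apply[OF x(2)] by simp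
  moreover have "sym_pair x (inv x \<otimes> (x \<otimes> x)) = 1"
    using x by (simp add: sym_pair_apply m_assoc[symmetric])
  ultimately have "rg_mult G (sym_pair x) (sym_pair x) (x \<otimes> x)
      = 1 + \<sigma> x * (\<sigma> x * (if st x \<otimes> st x = x \<otimes> x then 1 else 0))"
    using x by (simp add: sym_pair_mult)
  moreover have "rg_mult G (sym_pair x) (sym_pair x) (x \<otimes> x)
      + rg_mult G (sym_pair x) (sym_pair x) (x \<otimes> x) = 0"
    using anticommutativeD[OF anticommutative sym_pair_in_S[OF x] sym_pair_in_S[OF x]] .
  ultimately show ?thesis
    by (metis mult_2)
qed

lemma star_square_eq:
  assumes "x \<in> carrier G" "st x \<noteq> x"
  shows "st x \<otimes> st x = x \<otimes> x"
proof (rule ccontr)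
  assume "st x \<otimes> st x \<noteq> x \<otimes> x"
  then show False
    using sym_pair_square_coeff[OF assms] two_neq_zero by simp
qed

lemma two_delta_square_in_S:
  assumes x: "x \<in> carrier G" "st x \<noteq> x"
  shows "rg_smult 2 (rg_delta (x \<otimes> x)) \<in> S"
proof (rule two_delta_in_S)
  show "x \<otimes> x \<in> carrier G"
    using x by simp
  show "st (x \<otimes> x) = x \<otimes> x"
    using group_involution_mult[OF involution x(1) x(1)] star_square_eq[OF x] by simp
  have "\<sigma> (x \<otimes> x) = \<sigma> x * \<sigma> x"
    using x unit_hom unfolding unit_hom_def by blast
  then have "2 * (1 - \<sigma> (x \<otimes> x)) = 2 * (1 + \<sigma> x * \<sigma> x) - 4 * (\<sigma> x * \<sigma> x)"
    by (simp add: algebra_simps)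
  also have "\<dots> = 0"
    using sym_pair_square_coeff[OF x] four_eq_zero[OF x] unfolding star_square_eq[OF x] by simp
  finally show "2 * (1 - \<sigma> (x \<otimes> x)) = 0" .
qed

text \<open>Anticommuting 2p with v + \<sigma>(v)v*, the coefficient of p v is 2 on one side and vanishes
  on the other unless p v \<in> {v p, v* p}.\<close>
lemma twists_if_two_delta_in_S:
  assumes p: "p \<in> carrier G" and S: "rg_smult 2 (rg_delta p) \<in> S"
  shows "twists G st p"
  unfolding twists_def
proof (intro ballI impI, rule ccontr)
  fix v assume v: "v \<in> carrier G" "st v \<noteq> v"
    and "\<not> (p \<otimes> v = v \<otimes> p \<or> p \<otimes> v = st v \<otimes> p)"
  moreover have sv: "st v \<in> carrier G"
    using v group_involution_closed[OF involution] by auto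
  ultimately have "inv v \<otimes> (p \<otimes> v) \<noteq> p" "inv (st v) \<otimes> (p \<otimes> v) \<noteq> p"
    using p by (simp_all add: inv_solve_left')
  then have "rg_mult G (sym_pair v) (rg_smult 2 (rg_delta p)) (p \<otimes> v) = 0"
    using p v by (simp add: sym_pair_mult rg_smult_def rg_delta_def)
  moreover have "inv p \<otimes> (p \<otimes> v) = v"
    using p v by (simp add: inv_solve_left')
  then have "rg_mult G (rg_smult 2 (rg_delta p)) (sym_pair v) (p \<otimes> v) = 2"
    using p v by (simp add: rg_mult_smult_delta sym_pair_apply)
  ultimately show False
    using anticommutativeD[OF anticommutative S sym_pair_in_S[OF v(1,2)], of "p \<otimes> v"] two_neq_zero
    by simp
qed

lemma gcomm_square_eq_one:
  assumes x: "x \<in> carrier G" "st x \<noteq> x" and y: "y \<in> carrier G" "st y \<noteq> y"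
  shows "gcomm G (x \<otimes> x) y = \<one>"
proof -
  have "twists G st (x \<otimes> x)"
    using twists_if_two_delta_in_S[OF _ two_delta_square_in_S[OF x]] x by simp
  then have "(x \<otimes> x) \<otimes> y = y \<otimes> (x \<otimes> x)"
    using square_commute_if_twists[OF involution _ x(1) star_square_eq[OF x] y] by simp
  then show ?thesis
    using gcomm_eq_one_if_commute x y by simp
qed

end

theorem lemma3p8:
  fixes G :: "('g, 'b) monoid_scheme"
    and st :: "'g \<Rightarrow> 'g"
    and \<sigma> :: "'g \<Rightarrow> 'r::comm_ring_1"
  assumes "group G"
    and "CHAR('r) \<noteq> 2"
    and "group_involution G st"
    and "unit_hom G \<sigma>"
    and "\<exists>x\<in>carrier G. \<sigma> x \<noteq> 1"
    and "\<forall>x\<in>carrier G. \<sigma> (x \<otimes>\<^bsub>G\<^esub> st x) = 1"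
    and "anticommutative G (S_span G st \<sigma>)"
  shows "\<forall>x\<in>carrier G - sym_elems G st. \<forall>y\<in>carrier G - sym_elems G st.
           gcomm G (x \<otimes>\<^bsub>G\<^esub> x) y = \<one>\<^bsub>G\<^esub>"
proof -
  have "(1::'r) \<noteq> 0"
    using assms(5) by (metis mult_1 mult_zero_left)
  then interpret anticommutative_group_ring G st \<sigma>
    using assms(1,3,4,7) two_neq_zero_if_CHAR_neq_2[OF assms(2)]
    by (simp add: anticommutative_group_ring_def anticommutative_group_ring_axioms_def)
  show ?thesis
    using gcomm_square_eq_one by (auto simp: sym_elems_def)
qed

end
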